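(* Let $x=(x_1,x_2,x_3)$ be a triple of distinct points of $\partial H^n_{\mathbb{H}}$, let $\sigma_{12}$ be the real geodesic and $\Sigma_{12}$ the quaternionic line containing $x_1,x_2$ (at infinity), and let $\Pi:\overline{H^n_{\mathbb{H}}}\to\overline{\Sigma_{12}}$ be the orthogonal projection (extended continuously to ideal points). Then $$|\tan\mathbb{A}_{\mathbb{H}}(x)|=\sinh\big(d(\Pi(x_3),\sigma_{12})\big),$$ where $d$ is the hyperbolic distance in $H^n_{\mathbb{H}}$ (both sides being $+\infty$ when $\Pi(x_3)\in\partial\Sigma_{12}$).
   Context: Quaternionic hyperbolic space $H^n_{\mathbb{H}}$ is the set of negative lines in the left $\mathbb{H}$-vector space $\mathbb{H}^{n+1}$ with form $\langle z,w\rangle=\sum_{i=1}^n z_i\bar w_i-z_{n+1}\bar w_{n+1}$, $\partial H^n_{\mathbb{H}}$ the null lines; the metric is normalized so that sectional curvature lies in $[-1,-1/4]$, so each quaternionic line is isometric to real hyperbolic 4-space of curvature $-1$. For distinct points with lifts $\tilde x_i$, the triple product is $\langle\tilde x_1,\tilde x_2\rangle\langle\tilde x_2,\tilde x_3\rangle\langle\tilde x_3,\tilde x_1\rangle\in\mathbb{H}$, and $\mathbb{A}_{\mathbb{H}}(x)\in[0,\pi/2]$ is the angle in $\mathbb{H}\cong\mathbb{R}^4$ between $\mathbb{R}\cdot 1$ and this triple product. The orthogonal projection onto $\Sigma_{12}$ maps each point to its nearest point of $\Sigma_{12}$. *)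

theory Defs
  imports "HOL-Analysis.Analysis"
begin

section \<open>Quaternions, realised as real^4 (components 1,i,j,k)\<close>

type_synonym quat = "real^4"

definition qmul :: "quat \<Rightarrow> quat \<Rightarrow> quat" where
  "qmul a b = vector
     [a$1*b$1 - a$2*b$2 - a$3*b$3 - a$4*b$4,
      a$1*b$2 + a$2*b$1 + a$3*b$4 - a$4*b$3,
      a$1*b$3 - a$2*b$4 + a$3*b$1 + a$4*b$2,
      a$1*b$4 + a$2*b$3 - a$3*b$2 + a$4*b$1]"

definition qcnj :: "quat \<Rightarrow> quat" where
  "qcnj a = vector [a$1, - a$2, - a$3, - a$4]"

definition qis_real :: "quat \<Rightarrow> bool" where
  "qis_real a \<longleftrightarrow> a$2 = 0 \<and> a$3 = 0 \<and> a$4 = 0"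

section \<open>The left H-vector space H^(n+1): first n coordinates indexed by 'n, last one separate\<close>

type_synonym 'n qvec = "(quat^'n) \<times> quat"

definition qsmul :: "quat \<Rightarrow> 'n::finite qvec \<Rightarrow> 'n qvec" where
  "qsmul c v = ((\<chi> i. qmul c (fst v $ i)), qmul c (snd v))"

definition herm :: "'n::finite qvec \<Rightarrow> 'n qvec \<Rightarrow> quat" where
  "herm z w = (\<Sum>i\<in>UNIV. qmul (fst z $ i) (qcnj (fst w $ i))) - qmul (snd z) (qcnj (snd w))"

definition qline :: "'n::finite qvec \<Rightarrow> 'n qvec set" where
  "qline v = {qsmul c v | c. True}"

definition hyp :: "'n::finite qvec set set" where
  "hyp = {qline v | v. herm v v $ 1 < 0}"

definition bdry :: "'n::finite qvec set set" where
  "bdry = {qline v | v. v \<noteq> 0 \<and> herm v v = 0}"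

definition lift :: "'n::finite qvec set \<Rightarrow> 'n qvec" where
  "lift p = (SOME v. v \<in> p \<and> v \<noteq> 0)"

text \<open>Hyperbolic distance (curvature in [-1,-1/4]):
  cosh^2(d/2) = <z,w><w,z> / (<z,z><w,w>)\<close>
definition hdist :: "'n::finite qvec set \<Rightarrow> 'n qvec set \<Rightarrow> real" where
  "hdist p q = (let z = lift p; w = lift q in
     2 * arcosh (norm (herm z w) / sqrt (herm z z $ 1 * herm w w $ 1)))"

definition hdist_set :: "'n::finite qvec set \<Rightarrow> 'n qvec set set \<Rightarrow> real" where
  "hdist_set p S = Inf (hdist p ` S)"

definition qspan2 :: "'n::finite qvec \<Rightarrow> 'n qvec \<Rightarrow> 'n qvec set" where
  "qspan2 a b = {qsmul \<alpha> a + qsmul \<beta> b | \<alpha> \<beta>. True}"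

definition QLine :: "'n::finite qvec set \<Rightarrow> 'n qvec set \<Rightarrow> 'n qvec set set" where
  "QLine x1 x2 = {p \<in> hyp. p \<subseteq> qspan2 (lift x1) (lift x2)}"

definition QLine_bd :: "'n::finite qvec set \<Rightarrow> 'n qvec set \<Rightarrow> 'n qvec set set" where
  "QLine_bd x1 x2 = {p \<in> bdry. p \<subseteq> qspan2 (lift x1) (lift x2)}"

text \<open>The real geodesic sigma_12 with ideal endpoints x1, x2:
  the negative lines [a + b] with a, b lifts of x1, x2 and <a,b> real\<close>
definition geod :: "'n::finite qvec set \<Rightarrow> 'n qvec set \<Rightarrow> 'n qvec set set" where
  "geod x1 x2 = {qline (a + b) | a b. a \<in> x1 \<and> b \<in> x2 \<and> a \<noteq> 0 \<and> b \<noteq> 0 \<and>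
                   qis_real (herm a b) \<and> qline (a + b) \<in> hyp}"

definition proj :: "'n::finite qvec set set \<Rightarrow> 'n qvec set \<Rightarrow> 'n qvec set" where
  "proj S y = (THE p. p \<in> S \<and> (\<forall>q\<in>S. hdist y p \<le> hdist y q))"

text \<open>Convergence of points of the closure (projective / cone topology):
  some nonzero lifts converge to a nonzero lift of the limit\<close>
definition pconv :: "(nat \<Rightarrow> 'n::finite qvec set) \<Rightarrow> 'n qvec set \<Rightarrow> bool" where
  "pconv P p \<longleftrightarrow> (\<exists>V v. v \<in> p \<and> v \<noteq> 0 \<and> (\<forall>k. V k \<in> P k \<and> V k \<noteq> 0) \<and> V \<longlonglongrightarrow> v)"

text \<open>Continuous extension of the projection onto S (with ideal boundary Sb) to an ideal point x\<close>
definition proj_ext :: "'n::finite qvec set set \<Rightarrow> 'n qvec set set \<Rightarrow> 'n qvec set \<Rightarrow> 'n qvec set" where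
  "proj_ext S Sb x = (THE p. p \<in> S \<union> Sb \<and>
      (\<forall>Y. (\<forall>k. Y k \<in> hyp) \<and> pconv Y x \<longrightarrow> pconv (\<lambda>k. proj S (Y k)) p))"

text \<open>Quaternionic Cartan angular invariant: angle in R^4 between R*1 and the triple product\<close>
definition qcartan :: "'n::finite qvec set \<Rightarrow> 'n qvec set \<Rightarrow> 'n qvec set \<Rightarrow> real" where
  "qcartan x1 x2 x3 = (let a = lift x1; b = lift x2; c = lift x3;
      T = qmul (qmul (herm a b) (herm b c)) (herm c a) in arccos (\<bar>T $ 1\<bar> / norm T))"

end

theory Submission
  imports Defs
begin

text \<open>
  Lift the ideal points to null vectors \<open>a\<close>, \<open>b\<close>, \<open>c\<close>. As \<open>a\<close> and \<open>b\<close> are null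
  with \<open><a,b> \<noteq> 0\<close>, the orthogonal projection onto the quaternionic line through them is
  linear: it sends \<open>[z]\<close> to \<open>[w]\<close>, where \<open>w\<close> is the vector of \<open>span {a, b}\<close> having the
  same products with \<open>a\<close> and \<open>b\<close> as \<open>z\<close>; the reverse Cauchy-Schwarz inequality shows that
  this is the nearest point, and continuity of the formula gives the extension to the ideal
  point \<open>[c]\<close>. With the triple product \<open>T = <a,b><b,c><c,a>\<close> one finds
  \<open><w,w> = 2 Re T / |<a,b>|^2 \<le> 0\<close>, so \<open>[w]\<close> is ideal exactly when \<open>Re T = 0\<close>, i.e. when
  the angle is \<open>pi/2\<close>. Otherwise the points of the geodesic are \<open>[a + \<nu> b]\<close> with
  \<open><a, \<nu> b> = -r < 0\<close>, and the cosh of their distance to \<open>[w]\<close> has the form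
  \<open>(A^2 + r^2 B^2) / (r M)\<close>. By AM-GM its minimum over \<open>r\<close> is \<open>2AB / M = |T| / (-Re T)\<close>,
  which is \<open>1 / cos\<close> of the angle; hence the sinh of the distance is the tangent of the angle.
\<close>

section \<open>Quaternions\<close>

text \<open>\<open>Defs\<close> realises the quaternions as \<open>real^4\<close> with the product \<open>qmul\<close> written out. The
  same algebra as a datatype can be made an instance of \<open>real_div_algebra\<close>; \<open>hquat_of\<close>
  translates between the two.\<close>

datatype hquat = HQuat (qre: real) (qi: real) (qj: real) (qk: real)

lemma hquat_eqI: "qre a = qre b \<Longrightarrow> qi a = qi b \<Longrightarrow> qj a = qj b \<Longrightarrow> qk a = qk b \<Longrightarrow> a = b"
  by (cases a; cases b) auto

definition hconj :: "hquat \<Rightarrow> hquat" where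
  "hconj a = HQuat (qre a) (- qi a) (- qj a) (- qk a)"

definition sqnorm :: "hquat \<Rightarrow> real" where
  "sqnorm a = (qre a)\<^sup>2 + (qi a)\<^sup>2 + (qj a)\<^sup>2 + (qk a)\<^sup>2"

instantiation hquat :: real_div_algebra
begin

definition "0 = HQuat 0 0 0 0"
definition "1 = HQuat 1 0 0 0"
definition "a + b = HQuat (qre a + qre b) (qi a + qi b) (qj a + qj b) (qk a + qk b)"
definition "a - b = HQuat (qre a - qre b) (qi a - qi b) (qj a - qj b) (qk a - qk b)"
definition "- a = HQuat (- qre a) (- qi a) (- qj a) (- qk a)"
definition "r *\<^sub>R a = HQuat (r * qre a) (r * qi a) (r * qj a) (r * qk a)"
definition "a * b = HQuat
      (qre a * qre b - qi a * qi b - qj a * qj b - qk a * qk b)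
      (qre a * qi b + qi a * qre b + qj a * qk b - qk a * qj b)
      (qre a * qj b - qi a * qk b + qj a * qre b + qk a * qi b)
      (qre a * qk b + qi a * qj b - qj a * qi b + qk a * qre b)"
definition "inverse a = inverse (sqnorm a) *\<^sub>R hconj a"
definition "divide a b = a * inverse (b :: hquat)"

lemma hquat_sel_simps [simp]:
  "qre 0 = 0" "qi 0 = 0" "qj 0 = 0" "qk 0 = 0"
  "qre 1 = 1" "qi 1 = 0" "qj 1 = 0" "qk 1 = 0"
  "qre (a + b) = qre a + qre b" "qi (a + b) = qi a + qi b"
  "qj (a + b) = qj a + qj b" "qk (a + b) = qk a + qk b"
  "qre (a - b) = qre a - qre b" "qi (a - b) = qi a - qi b"
  "qj (a - b) = qj a - qj b" "qk (a - b) = qk a - qk b"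
  "qre (- a) = - qre a" "qi (- a) = - qi a" "qj (- a) = - qj a" "qk (- a) = - qk a"
  "qre (r *\<^sub>R a) = r * qre a" "qi (r *\<^sub>R a) = r * qi a"
  "qj (r *\<^sub>R a) = r * qj a" "qk (r *\<^sub>R a) = r * qk a"
  "qre (hconj a) = qre a" "qi (hconj a) = - qi a" "qj (hconj a) = - qj a" "qk (hconj a) = - qk a"
  by (simp_all add: zero_hquat_def one_hquat_def plus_hquat_def minus_hquat_def
      uminus_hquat_def scaleR_hquat_def hconj_def)

lemma hquat_mult_sel:
  "qre (a * b) = qre a * qre b - qi a * qi b - qj a * qj b - qk a * qk b"
  "qi (a * b) = qre a * qi b + qi a * qre b + qj a * qk b - qk a * qj b"
  "qj (a * b) = qre a * qj b - qi a * qk b + qj a * qre b + qk a * qi b"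
  "qk (a * b) = qre a * qk b + qi a * qj b - qj a * qi b + qk a * qre b"
  by (simp_all add: times_hquat_def)

lemma hconj_mult_self_scaleR: "hconj a * a = sqnorm a *\<^sub>R 1" "a * hconj a = sqnorm a *\<^sub>R 1"
  by (intro hquat_eqI; simp add: hquat_mult_sel sqnorm_def algebra_simps power2_eq_square)+

instance
proof
  fix a :: hquat
  assume "a \<noteq> 0"
  then have "sqnorm a \<noteq> 0"
    by (cases a) (auto simp: sqnorm_def zero_hquat_def add_nonneg_eq_0_iff)
  have scaleR_mult: "(r *\<^sub>R x) * y = r *\<^sub>R (x * y)" "x * (r *\<^sub>R y) = r *\<^sub>R (x * y)"
    for r and x y :: hquat
    by (intro hquat_eqI; simp add: hquat_mult_sel algebra_simps)+
  show "inverse a * a = 1" "a * inverse a = 1"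
    using \<open>sqnorm a \<noteq> 0\<close>
    by (simp_all add: inverse_hquat_def scaleR_mult hconj_mult_self_scaleR)
       (intro hquat_eqI; simp)+
qed (auto intro!: hquat_eqI simp: hquat_mult_sel divide_hquat_def inverse_hquat_def zero_hquat_def
    one_hquat_def algebra_simps)

end

lemma of_real_hquat_sel [simp]:
  "qre (of_real r) = r" "qi (of_real r) = 0" "qj (of_real r) = 0" "qk (of_real r) = 0"
  by (simp_all add: of_real_def)

lemma of_real_mult_left: "of_real r * a = r *\<^sub>R (a :: 'a::real_algebra_1)"
  and of_real_mult_right: "a * of_real r = r *\<^sub>R (a :: 'a::real_algebra_1)"
  by (simp_all add: of_real_def)

lemma mult_hconj_self: "a * hconj a = of_real (sqnorm a)"
  by (simp add: hconj_mult_self_scaleR of_real_def)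

lemma sqnorm_nonneg: "0 \<le> sqnorm a"
  by (simp add: sqnorm_def)

lemma sqnorm_eq_0_iff [simp]: "sqnorm a = 0 \<longleftrightarrow> a = 0"
  by (cases a) (auto simp: sqnorm_def zero_hquat_def add_nonneg_eq_0_iff)

lemma sqnorm_zero [simp]: "sqnorm 0 = 0"
  by simp

lemma sqnorm_pos: "a \<noteq> 0 \<Longrightarrow> 0 < sqnorm a"
  using sqnorm_nonneg[of a] by (simp add: order_le_less)

lemma sqnorm_mult: "sqnorm (a * b) = sqnorm a * sqnorm b"
  by (simp add: hquat_mult_sel sqnorm_def algebra_simps power2_eq_square)

lemma sqnorm_hconj [simp]: "sqnorm (hconj a) = sqnorm a"
  by (simp add: sqnorm_def)

lemma sqnorm_of_real [simp]: "sqnorm (of_real r) = r\<^sup>2"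
  by (simp add: sqnorm_def)

lemma qre_sq_le_sqnorm: "(qre a)\<^sup>2 \<le> sqnorm a"
  by (simp add: sqnorm_def)

lemma qre_mult_commute: "qre (a * b) = qre (b * a)"
  by (simp add: hquat_mult_sel algebra_simps)

lemma sqnorm_diff: "sqnorm (a - b) = sqnorm a - 2 * qre (a * hconj b) + sqnorm b"
  by (simp add: hquat_mult_sel sqnorm_def power2_eq_square algebra_simps)

lemma hconj_hconj [simp]: "hconj (hconj a) = a"
  by (intro hquat_eqI) simp_all

lemma hconj_zero [simp]: "hconj 0 = 0"
  by (intro hquat_eqI) simp_all

lemma hconj_of_real [simp]: "hconj (of_real r) = of_real r"
  by (intro hquat_eqI) simp_all

lemma hconj_eq_0_iff [simp]: "hconj a = 0 \<longleftrightarrow> a = 0"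
  by (metis sqnorm_eq_0_iff sqnorm_hconj)

lemma hconj_minus: "hconj (- a) = - hconj a"
  and hconj_add: "hconj (a + b) = hconj a + hconj b"
  and hconj_diff: "hconj (a - b) = hconj a - hconj b"
  and hconj_mult: "hconj (a * b) = hconj b * hconj a"
  by (intro hquat_eqI; simp add: hquat_mult_sel algebra_simps)+

lemma hconj_sum: "hconj (sum f A) = (\<Sum>x\<in>A. hconj (f x))"
  by (induction A rule: infinite_finite_induct) (simp_all add: hconj_add)

lemma hconj_scaleR [simp]: "hconj (r *\<^sub>R a) = r *\<^sub>R hconj a"
  by (intro hquat_eqI) simp_all

lemma sqnorm_scaleR [simp]: "sqnorm (r *\<^sub>R a) = r\<^sup>2 * sqnorm a"
  by (simp add: sqnorm_def power2_eq_square algebra_simps)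

lemma hconj_inverse: "hconj (inverse a) = inverse (hconj a)"
  by (simp add: inverse_hquat_def)

lemma sqnorm_inverse: "sqnorm (inverse a) = inverse (sqnorm a)"
  by (cases "a = 0") (simp_all add: inverse_hquat_def power2_eq_square)

lemma abs_qre_le: "\<bar>qre x\<bar> \<le> sqrt (sqnorm x)"
  by (metis qre_sq_le_sqnorm real_sqrt_abs real_sqrt_le_mono)

lemma one_le_norm_div_neg_qre: "qre x < 0 \<Longrightarrow> 1 \<le> sqrt (sqnorm x) / - qre x"
  using abs_qre_le[of x] by (subst pos_le_divide_eq) auto

definition hquat_of :: "quat \<Rightarrow> hquat" where
  "hquat_of a = HQuat (a$1) (a$2) (a$3) (a$4)"

definition quat_of :: "hquat \<Rightarrow> quat" where
  "quat_of x = vector [qre x, qi x, qj x, qk x]"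

lemma hquat_of_sel [simp]:
  "qre (hquat_of a) = a$1" "qi (hquat_of a) = a$2" "qj (hquat_of a) = a$3" "qk (hquat_of a) = a$4"
  by (simp_all add: hquat_of_def)

lemma vector_4_nth [simp]:
  "(vector [x, y, z, w] :: real^4)$1 = x" "(vector [x, y, z, w] :: real^4)$2 = y"
  "(vector [x, y, z, w] :: real^4)$3 = z" "(vector [x, y, z, w] :: real^4)$4 = w"
  by (simp_all add: vector_def)

lemma quat_of_hquat_of [simp]: "quat_of (hquat_of a) = a"
  by (simp add: quat_of_def vec_eq_iff forall_4)

lemma hquat_of_quat_of [simp]: "hquat_of (quat_of x) = x"
  by (intro hquat_eqI) (simp_all add: quat_of_def)

lemma hquat_of_inject [simp]: "hquat_of a = hquat_of b \<longleftrightarrow> a = b"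
  by (metis quat_of_hquat_of)

lemma hquat_of_qmul [simp]: "hquat_of (qmul a b) = hquat_of a * hquat_of b"
  and hquat_of_qcnj [simp]: "hquat_of (qcnj a) = hconj (hquat_of a)"
  and hquat_of_add [simp]: "hquat_of (a + b) = hquat_of a + hquat_of b"
  and hquat_of_diff [simp]: "hquat_of (a - b) = hquat_of a - hquat_of b"
  and hquat_of_zero [simp]: "hquat_of 0 = 0"
  and hquat_of_scaleR [simp]: "hquat_of (r *\<^sub>R a) = r *\<^sub>R hquat_of a"
  by (intro hquat_eqI; simp add: hquat_mult_sel qmul_def qcnj_def)+

lemma hquat_of_eq_0_iff [simp]: "hquat_of a = 0 \<longleftrightarrow> a = 0"
  by (metis hquat_of_inject hquat_of_zero)

lemma hquat_of_sum: "hquat_of (sum f A) = (\<Sum>x\<in>A. hquat_of (f x))"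
  by (induction A rule: infinite_finite_induct) simp_all

lemma quat_of_mult: "quat_of (hquat_of a * x) = qmul a (quat_of x)"
  by (simp flip: hquat_of_inject)

lemma norm_quat_eq: "norm (a :: quat) = sqrt (sqnorm (hquat_of a))"
  by (simp add: norm_vec_def L2_set_def sum_4 sqnorm_def)

lemma qis_real_iff: "qis_real a \<longleftrightarrow> (\<exists>s. hquat_of a = of_real s)"
proof
  assume "qis_real a"
  then show "\<exists>s. hquat_of a = of_real s"
    by (intro exI[of _ "a$1"] hquat_eqI) (simp_all add: qis_real_def)
qed (auto simp: qis_real_def dest: arg_cong[of _ _ qi] arg_cong[of _ _ qj] arg_cong[of _ _ qk])

section \<open>The Hermitian form of signature (n,1)\<close>

definition coord :: "'n::finite qvec \<Rightarrow> 'n \<Rightarrow> hquat" where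
  "coord z i = hquat_of (fst z $ i)"

definition last_coord :: "'n::finite qvec \<Rightarrow> hquat" where
  "last_coord z = hquat_of (snd z)"

definition hform :: "'n::finite qvec \<Rightarrow> 'n qvec \<Rightarrow> hquat" where
  "hform z w = hquat_of (herm z w)"

definition hsq :: "'n::finite qvec \<Rightarrow> real" where
  "hsq z = herm z z $ 1"

definition hscale :: "hquat \<Rightarrow> 'n::finite qvec \<Rightarrow> 'n qvec" (infixr \<open>*\<^sub>H\<close> 75) where
  "c *\<^sub>H v = qsmul (quat_of c) v"

lemma qvec_eq_iff: "z = w \<longleftrightarrow> (\<forall>i. coord z i = coord w i) \<and> last_coord z = last_coord w"
  by (auto simp: coord_def last_coord_def vec_eq_iff prod_eq_iff)

lemma coord_simps [simp]:
  "coord (z + w) i = coord z i + coord w i" "coord (z - w) i = coord z i - coord w i"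
  "coord 0 i = 0" "coord (c *\<^sub>H z) i = c * coord z i" "coord (r *\<^sub>R z) i = r *\<^sub>R coord z i"
  and last_coord_simps [simp]:
  "last_coord (z + w) = last_coord z + last_coord w"
  "last_coord (z - w) = last_coord z - last_coord w"
  "last_coord 0 = 0" "last_coord (c *\<^sub>H z) = c * last_coord z"
  "last_coord (r *\<^sub>R z) = r *\<^sub>R last_coord z"
  by (simp_all add: coord_def last_coord_def hscale_def qsmul_def)

lemma hform_eq:
  "hform z w = (\<Sum>i\<in>UNIV. coord z i * hconj (coord w i)) - last_coord z * hconj (last_coord w)"
  by (simp add: hform_def herm_def hquat_of_sum coord_def last_coord_def)

lemma hform_add_left: "hform (z + z') w = hform z w + hform z' w"
  and hform_add_right: "hform w (z + z') = hform w z + hform w z'"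
  and hform_diff_left: "hform (z - z') w = hform z w - hform z' w"
  by (simp_all add: hform_eq algebra_simps sum.distrib sum_subtractf hconj_add hconj_diff)

lemma hform_hscale_left: "hform (c *\<^sub>H z) w = c * hform z w"
  by (simp add: hform_eq algebra_simps sum_distrib_left mult.assoc)

lemma hform_hscale_right: "hform z (c *\<^sub>H w) = hform z w * hconj c"
  by (simp add: hform_eq algebra_simps sum_distrib_right mult.assoc hconj_mult)

lemma hform_swap: "hform w z = hconj (hform z w)"
  by (simp add: hform_eq hconj_diff hconj_sum hconj_mult)

lemma hform_zero [simp]: "hform 0 w = 0" "hform w 0 = 0"
  by (simp_all add: hform_eq)

lemma hform_self_eq: "hform z z = of_real ((\<Sum>i\<in>UNIV. sqnorm (coord z i)) - sqnorm (last_coord z))"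
  by (simp add: hform_eq mult_hconj_self)

lemma hsq_eq_qre_hform: "hsq z = qre (hform z z)"
  by (simp add: hsq_def hform_def)

lemma hsq_eq: "hsq z = (\<Sum>i\<in>UNIV. sqnorm (coord z i)) - sqnorm (last_coord z)"
  by (simp only: hsq_eq_qre_hform hform_self_eq of_real_hquat_sel)

lemma hsq_zero [simp]: "hsq 0 = 0"
  by (simp add: hsq_eq)

lemma hform_self: "hform z z = of_real (hsq z)"
  by (simp only: hform_self_eq hsq_eq)

lemma hscale_hscale [simp]: "c *\<^sub>H d *\<^sub>H v = (c * d) *\<^sub>H v"
  and hscale_one [simp]: "1 *\<^sub>H v = v"
  and hscale_zero_left [simp]: "0 *\<^sub>H v = 0"
  and hscale_zero_right [simp]: "c *\<^sub>H 0 = 0"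
  and hscale_add_right: "c *\<^sub>H (v + w) = c *\<^sub>H v + c *\<^sub>H w"
  by (simp_all add: qvec_eq_iff mult.assoc algebra_simps)

lemma hscale_eq_0_iff [simp]: "c *\<^sub>H v = 0 \<longleftrightarrow> c = 0 \<or> v = 0"
  by (metis hscale_hscale hscale_one hscale_zero_left hscale_zero_right left_inverse)

lemma hsq_hscale: "hsq (c *\<^sub>H z) = sqnorm c * hsq z"
proof -
  have "of_real (hsq (c *\<^sub>H z)) = c * of_real (hsq z) * hconj c"
    by (simp add: hform_hscale_left hform_hscale_right flip: hform_self)
  also have "\<dots> = of_real (sqnorm c * hsq z)"
    by (simp add: of_real_mult_left of_real_mult_right mult_hconj_self)
  finally show ?thesis
    by (simp only: of_real_eq_iff)
qed

lemma hsq_add_orth: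
  assumes "hform u v = 0"
  shows "hsq (u + v) = hsq u + hsq v"
proof -
  have "hform v u = 0"
    using assms hform_swap[of v u] by simp
  then have "hform (u + v) (u + v) = hform u u + hform v v"
    using assms by (simp add: hform_add_left hform_add_right)
  then show ?thesis
    by (simp add: hform_self flip: of_real_add)
qed

lemma qsmul_eq_hscale: "qsmul c v = hquat_of c *\<^sub>H v"
  by (simp add: hscale_def)

lemma mem_qline: "z \<in> qline v \<longleftrightarrow> (\<exists>k. z = k *\<^sub>H v)"
  by (auto simp: qline_def qsmul_eq_hscale) (metis hquat_of_quat_of)

lemma mem_qspan2: "z \<in> qspan2 a b \<longleftrightarrow> (\<exists>l m. z = l *\<^sub>H a + m *\<^sub>H b)"
  by (auto simp: qspan2_def qsmul_eq_hscale) (metis hquat_of_quat_of)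

lemma qline_self: "v \<in> qline v"
  by (metis hscale_one mem_qline)

lemma hscale_in_qline: "k *\<^sub>H v \<in> qline v"
  by (auto simp: mem_qline)

lemma mem_qline_nonzero:
  assumes "z \<in> qline v" "z \<noteq> 0"
  obtains k where "k \<noteq> 0" "z = k *\<^sub>H v"
  using assms by (auto simp: mem_qline)

lemma qline_hscale:
  assumes "k \<noteq> 0"
  shows "qline (k *\<^sub>H v) = qline v"
proof
  show "qline (k *\<^sub>H v) \<subseteq> qline v"
    by (auto simp: mem_qline)
  show "qline v \<subseteq> qline (k *\<^sub>H v)"
  proof
    fix z
    assume "z \<in> qline v"
    then obtain m where "z = m *\<^sub>H v"
      by (auto simp: mem_qline)
    then have "z = (m * inverse k) *\<^sub>H k *\<^sub>H v"
      using assms by (simp add: mult.assoc)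
    then show "z \<in> qline (k *\<^sub>H v)"
      unfolding mem_qline by blast
  qed
qed

lemma qline_eq_qline: "z \<in> qline v \<Longrightarrow> z \<noteq> 0 \<Longrightarrow> qline z = qline v"
  by (metis mem_qline_nonzero qline_hscale)

lemma qline_subset_qspan2: "w \<in> qspan2 a b \<Longrightarrow> qline w \<subseteq> qspan2 a b"
  by (auto simp: mem_qline mem_qspan2 hscale_add_right) blast

lemma hsq_pos_if_last_coord_eq_0:
  assumes "last_coord v = 0" "v \<noteq> 0"
  shows "0 < hsq v"
proof -
  obtain i where "coord v i \<noteq> 0"
    using assms by (auto simp: qvec_eq_iff)
  then have "0 < (\<Sum>j\<in>UNIV. sqnorm (coord v j))"
    by (intro sum_pos2[of UNIV i]) (auto simp: sqnorm_pos sqnorm_nonneg)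
  then show ?thesis
    using assms(1) by (simp add: hsq_eq)
qed

lemma last_coord_neq_0: "hsq v \<le> 0 \<Longrightarrow> v \<noteq> 0 \<Longrightarrow> last_coord v \<noteq> 0"
  using hsq_pos_if_last_coord_eq_0 by fastforce

lemma hsq_add_hscale_orth:
  assumes "hform u a = 0"
  shows "hsq (u + k *\<^sub>H a) = hsq u + sqnorm k * hsq a"
  using assms by (simp add: hsq_add_orth hform_hscale_right hsq_hscale)

text \<open>A vector \<open>a \<noteq> 0\<close> with \<open>hsq a \<le> 0\<close> has nonzero last coordinate, so a multiple of it
  kills the last coordinate of \<open>u\<close>; the form is positive definite on such vectors.\<close>

lemma hsq_orth_split:
  assumes "hsq a \<le> 0" "a \<noteq> 0" "hform u a = 0"
  obtains k where "last_coord (u + k *\<^sub>H a) = 0" "hsq (u + k *\<^sub>H a) = hsq u + sqnorm k * hsq a"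
proof
  define k where "k = - last_coord u * inverse (last_coord a)"
  show "last_coord (u + k *\<^sub>H a) = 0"
    using last_coord_neq_0[OF assms(1,2)] by (simp add: k_def mult.assoc)
  show "hsq (u + k *\<^sub>H a) = hsq u + sqnorm k * hsq a"
    using assms(3) by (rule hsq_add_hscale_orth)
qed

lemma hsq_orth_null:
  assumes "hsq a = 0" "a \<noteq> 0" "hform u a = 0"
  shows "0 \<le> hsq u" and "hsq u = 0 \<Longrightarrow> u \<in> qline a"
proof -
  obtain k where k: "last_coord (u + k *\<^sub>H a) = 0" "hsq (u + k *\<^sub>H a) = hsq u"
    using hsq_orth_split[of a u] assms by auto
  show "0 \<le> hsq u"
    using hsq_pos_if_last_coord_eq_0[OF k(1)] k(2) by (cases "u + k *\<^sub>H a = 0") auto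
  show "u \<in> qline a" if "hsq u = 0"
  proof -
    have "u + k *\<^sub>H a = 0"
      using hsq_pos_if_last_coord_eq_0[OF k(1)] k(2) that by force
    then have "u = (- k) *\<^sub>H a"
      by (simp add: eq_neg_iff_add_eq_0 qvec_eq_iff)
    then show ?thesis
      by (auto simp: mem_qline)
  qed
qed

lemma hsq_orth_neg:
  assumes "hsq w < 0" "hform r w = 0" "r \<noteq> 0"
  shows "0 < hsq r"
proof -
  have "w \<noteq> 0"
    using assms(1) by auto
  then obtain k where k: "last_coord (r + k *\<^sub>H w) = 0" "hsq (r + k *\<^sub>H w) = hsq r + sqnorm k * hsq w"
    using hsq_orth_split[of w r] assms by auto
  have "r + k *\<^sub>H w \<noteq> 0"
  proof
    assume sum_eq_0: "r + k *\<^sub>H w = 0"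
    have "k * of_real (hsq w) = hform (r + k *\<^sub>H w) w"
      using assms(2) by (simp add: hform_add_left hform_hscale_left hform_self)
    then have "k = 0"
      using sum_eq_0 assms(1) by simp
    then show False
      using sum_eq_0 assms(3) by simp
  qed
  then have "0 < hsq r + sqnorm k * hsq w"
    using hsq_pos_if_last_coord_eq_0[OF k(1)] k(2) by simp
  moreover have "sqnorm k * hsq w \<le> 0"
    using assms(1) sqnorm_nonneg[of k] by (simp add: mult_nonneg_nonpos)
  ultimately show ?thesis
    by linarith
qed

lemma orth_null_qline_eq:
  assumes "hsq a = 0" "a \<noteq> 0" "hsq c = 0" "c \<noteq> 0" "hform c a = 0"
  shows "qline c = qline a"
  using hsq_orth_null(2)[OF assms(1,2,5) assms(3)] assms(4) by (rule qline_eq_qline)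

lemma reverse_cauchy_schwarz:
  assumes "hsq w < 0"
  shows "hsq w * hsq q \<le> sqnorm (hform q w)"
    and "sqnorm (hform q w) = hsq w * hsq q \<Longrightarrow> q \<in> qline w"
proof -
  define k where "k = hform q w * inverse (of_real (hsq w))"
  define r where "r = q - k *\<^sub>H w"
  have "hform r w = 0"
    using assms by (simp add: r_def k_def hform_diff_left hform_hscale_left hform_self mult.assoc)
  have q_eq: "q = r + k *\<^sub>H w"
    by (simp add: r_def)
  have "sqnorm k = sqnorm (hform q w) / (hsq w)\<^sup>2"
    by (simp add: k_def sqnorm_mult sqnorm_inverse divide_inverse)
  then have key: "hsq w * hsq q = hsq w * hsq r + sqnorm (hform q w)"
    using assms hsq_add_hscale_orth[OF \<open>hform r w = 0\<close>, of k]
    by (simp add: q_eq field_simps power2_eq_square)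
  have hsq_r: "r \<noteq> 0 \<Longrightarrow> 0 < hsq r"
    using hsq_orth_neg[OF assms \<open>hform r w = 0\<close>] .
  then have "hsq w * hsq r \<le> 0"
    using assms by (cases "r = 0") (auto intro!: mult_nonpos_nonneg)
  then show "hsq w * hsq q \<le> sqnorm (hform q w)"
    using key by linarith
  assume "sqnorm (hform q w) = hsq w * hsq q"
  then have "r = 0"
    using key hsq_r assms by fastforce
  then show "q \<in> qline w"
    using q_eq by (auto simp: mem_qline)
qed

section \<open>Points, lifts and distances\<close>

lemma qline_eq_imp_hscale:
  assumes "qline g = qline v" "v \<noteq> 0"
  obtains k where "k \<noteq> 0" "v = k *\<^sub>H g"
  using assms qline_self[of v] by (metis mem_qline_nonzero)

lemma hyp_iff: "p \<in> hyp \<longleftrightarrow> (\<exists>v. p = qline v \<and> hsq v < 0)"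
  by (simp add: hyp_def hsq_def)

lemma herm_self_eq_0_iff: "herm v v = 0 \<longleftrightarrow> hsq v = 0"
  by (metis hform_def hform_self hquat_of_eq_0_iff of_real_eq_0_iff)

lemma bdry_iff: "p \<in> bdry \<longleftrightarrow> (\<exists>v. p = qline v \<and> v \<noteq> 0 \<and> hsq v = 0)"
  by (simp add: bdry_def herm_self_eq_0_iff)

lemma qline_in_hyp_iff: "qline g \<in> hyp \<longleftrightarrow> hsq g < 0"
proof
  assume "qline g \<in> hyp"
  then obtain v where v: "qline g = qline v" "hsq v < 0"
    by (auto simp: hyp_iff)
  moreover have "v \<noteq> 0"
    using v(2) by auto
  ultimately obtain k where "k \<noteq> 0" "v = k *\<^sub>H g"
    by (metis qline_eq_imp_hscale)
  then show "hsq g < 0"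
    using v(2) sqnorm_pos[of k] by (simp add: hsq_hscale mult_less_0_iff)
qed (unfold hyp_iff, blast)

lemma qline_in_bdry_iff: "qline g \<in> bdry \<longleftrightarrow> g \<noteq> 0 \<and> hsq g = 0"
proof
  assume "qline g \<in> bdry"
  then obtain v where v: "qline g = qline v" "v \<noteq> 0" "hsq v = 0"
    by (auto simp: bdry_iff)
  obtain k where "k \<noteq> 0" "v = k *\<^sub>H g"
    using v(1,2) by (rule qline_eq_imp_hscale)
  then show "g \<noteq> 0 \<and> hsq g = 0"
    using v(2,3) by (auto simp: hsq_hscale)
qed (unfold bdry_iff, blast)

lemma lift_qline:
  assumes "v \<noteq> 0"
  obtains k where "k \<noteq> 0" "lift (qline v) = k *\<^sub>H v"
proof -
  have "lift (qline v) \<in> qline v \<and> lift (qline v) \<noteq> 0"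
    unfolding lift_def by (rule someI[of _ v]) (simp add: qline_self assms)
  then show thesis
    using that by (metis mem_qline_nonzero)
qed

lemma bdry_lift:
  assumes "x \<in> bdry"
  shows "lift x \<noteq> 0" "hsq (lift x) = 0" "x = qline (lift x)"
proof -
  obtain v where v: "x = qline v" "v \<noteq> 0" "hsq v = 0"
    using assms by (auto simp: bdry_iff)
  moreover obtain k where "k \<noteq> 0" "lift x = k *\<^sub>H v"
    using lift_qline[OF v(2)] v(1) by blast
  ultimately show "lift x \<noteq> 0" "hsq (lift x) = 0" "x = qline (lift x)"
    by (simp_all add: hsq_hscale qline_hscale)
qed

lemma hform_lift_neq_0:
  assumes "x \<in> bdry" "y \<in> bdry" "x \<noteq> y"
  shows "hform (lift x) (lift y) \<noteq> 0"
  using orth_null_qline_eq[of "lift y" "lift x"] bdry_lift[OF assms(1)] bdry_lift[OF assms(2)]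
    assms(3)
  by auto

definition hratio :: "'n::finite qvec \<Rightarrow> 'n qvec \<Rightarrow> real" where
  "hratio z w = sqnorm (hform z w) / (hsq z * hsq w)"

lemma hratio_hscale: "k \<noteq> 0 \<Longrightarrow> m \<noteq> 0 \<Longrightarrow> hratio (k *\<^sub>H z) (m *\<^sub>H w) = hratio z w"
  by (simp add: hratio_def hform_hscale_left hform_hscale_right sqnorm_mult hsq_hscale)

lemma hratio_ge_1:
  assumes "hsq z < 0" "hsq w < 0"
  shows "1 \<le> hratio z w"
proof -
  have "0 < hsq z * hsq w"
    using assms by (rule mult_neg_neg)
  then show ?thesis
    using reverse_cauchy_schwarz(1)[OF assms(2), of z] by (simp add: hratio_def mult.commute)
qed

lemma two_arcosh_sqrt:
  fixes t :: real
  assumes "1 \<le> t"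
  shows "2 * arcosh (sqrt t) = arcosh (2 * t - 1)"
proof -
  have "cosh (2 * arcosh (sqrt t)) = 2 * t - 1"
    using assms by (simp add: cosh_double_cosh)
  moreover have "0 \<le> 2 * arcosh (sqrt t)"
    using assms by simp
  ultimately show ?thesis
    by (metis arcosh_cosh_real)
qed

lemma hdist_qline:
  assumes "hsq z < 0" "hsq w < 0"
  shows "hdist (qline z) (qline w) = arcosh (2 * hratio z w - 1)"
proof -
  obtain k m where k: "k \<noteq> 0" "lift (qline z) = k *\<^sub>H z"
    and m: "m \<noteq> 0" "lift (qline w) = m *\<^sub>H w"
    using lift_qline assms by (metis hsq_zero less_irrefl)
  have "hdist (qline z) (qline w) = 2 * arcosh (sqrt (hratio (k *\<^sub>H z) (m *\<^sub>H w)))"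
    by (simp add: hdist_def Let_def k m hratio_def norm_quat_eq hform_def hsq_def real_sqrt_divide)
  also have "\<dots> = arcosh (2 * hratio z w - 1)"
    using two_arcosh_sqrt hratio_ge_1[OF assms] by (simp add: hratio_hscale k m)
  finally show ?thesis .
qed

lemma arcosh_le_arcosh_iff: "1 \<le> x \<Longrightarrow> 1 \<le> y \<Longrightarrow> arcosh x \<le> arcosh y \<longleftrightarrow> x \<le> (y :: real)"
  by (metis arcosh_less_iff_real not_less)

lemma hdist_qline_le_iff:
  assumes "hsq y < 0" "hsq g < 0" "hsq g' < 0"
  shows "hdist (qline y) (qline g) \<le> hdist (qline y) (qline g') \<longleftrightarrow> hratio y g \<le> hratio y g'"
proof -
  have "1 \<le> 2 * hratio y g - 1" "1 \<le> 2 * hratio y g' - 1"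
    using hratio_ge_1[OF assms(1,2)] hratio_ge_1[OF assms(1,3)] by simp_all
  then show ?thesis
    by (simp add: hdist_qline assms arcosh_le_arcosh_iff)
qed

section \<open>Projection onto the quaternionic line through two ideal points\<close>

lemma qspan2_left: "a \<in> qspan2 a b"
  and qspan2_right: "b \<in> qspan2 a b"
  unfolding mem_qspan2 by (metis add_0 add.right_neutral hscale_one hscale_zero_left)+

lemma proj_eqI:
  assumes "p \<in> S" "\<And>q. q \<in> S \<Longrightarrow> hdist y p \<le> hdist y q \<and> (hdist y q \<le> hdist y p \<longrightarrow> q = p)"
  shows "proj S y = p"
  unfolding proj_def by (rule the_equality) (use assms in blast)+

locale null_pair =
  fixes a b :: "'n::finite qvec"
  assumes hsq_a: "hsq a = 0" and hsq_b: "hsq b = 0" and hform_ab: "hform a b \<noteq> 0"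
begin

lemma a_neq_0: "a \<noteq> 0" and b_neq_0: "b \<noteq> 0"
  using hform_ab by auto

lemma hform_a_a: "hform a a = 0" and hform_b_b: "hform b b = 0"
  by (simp_all add: hform_self hsq_a hsq_b)

lemma hsq_span: "hsq (l *\<^sub>H a + m *\<^sub>H b) = 2 * qre (l * hform a b * hconj m)"
proof -
  have "hform (l *\<^sub>H a + m *\<^sub>H b) (l *\<^sub>H a + m *\<^sub>H b)
      = l * hform a b * hconj m + hconj (l * hform a b * hconj m)"
    by (simp add: hform_add_left hform_add_right hform_hscale_left hform_hscale_right
        hform_a_a hform_b_b hform_swap[of b a] hconj_mult mult.assoc)
  then show ?thesis
    by (simp add: hsq_eq_qre_hform)
qed

text \<open>Since \<open>a\<close> and \<open>b\<close> are null, this is the unique point of their span that has the same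
  products with \<open>a\<close> and \<open>b\<close> as \<open>z\<close>.\<close>

definition span_proj :: "'n qvec \<Rightarrow> 'n qvec" where
  "span_proj z = (hform z b * inverse (hform a b)) *\<^sub>H a
     + (hform z a * inverse (hconj (hform a b))) *\<^sub>H b"

lemma hform_span_proj_a: "hform (span_proj z) a = hform z a"
  and hform_span_proj_b: "hform (span_proj z) b = hform z b"
  using hform_ab
  by (simp_all add: span_proj_def hform_add_left hform_hscale_left hform_a_a hform_b_b
      hform_swap[of b a] mult.assoc)

lemma span_proj_in_qspan2: "span_proj z \<in> qspan2 a b"
  unfolding span_proj_def mem_qspan2 by blast

lemma span_proj_hscale: "span_proj (k *\<^sub>H z) = k *\<^sub>H span_proj z"
  by (simp add: span_proj_def hform_hscale_left hscale_add_right mult.assoc)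

lemma hform_diff_span_proj:
  assumes "g \<in> qspan2 a b"
  shows "hform (z - span_proj z) g = 0"
proof -
  obtain l m where "g = l *\<^sub>H a + m *\<^sub>H b"
    using assms by (auto simp: mem_qspan2)
  then show ?thesis
    by (simp add: hform_add_right hform_diff_left hform_hscale_right hform_span_proj_a
        hform_span_proj_b)
qed

lemma hsq_span_proj_add: "hsq z = hsq (span_proj z) + hsq (z - span_proj z)"
proof -
  have "hform (span_proj z) (z - span_proj z) = 0"
    using hform_diff_span_proj[OF span_proj_in_qspan2] hform_swap by (metis hconj_zero)
  then show ?thesis
    using hsq_add_orth by fastforce
qed

lemma hsq_diff_span_proj_nonneg: "0 \<le> hsq (z - span_proj z)"
  using hsq_orth_null(1)[OF hsq_a a_neq_0 hform_diff_span_proj[OF qspan2_left]] .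

lemma hsq_span_proj_le: "hsq (span_proj z) \<le> hsq z"
  using hsq_span_proj_add hsq_diff_span_proj_nonneg by (metis le_add_same_cancel1)

lemma span_proj_null:
  assumes "hsq c = 0"
  shows "span_proj c = c \<or> hsq (span_proj c) < 0"
proof (cases "hsq (c - span_proj c) = 0")
  case True
  have "hform (c - span_proj c) a = 0" "hform (c - span_proj c) b = 0"
    by (simp_all add: hform_diff_span_proj qspan2_left qspan2_right)
  moreover obtain k where k: "c - span_proj c = k *\<^sub>H a"
    using hsq_orth_null(2)[OF hsq_a a_neq_0 \<open>hform (c - span_proj c) a = 0\<close> True]
    by (auto simp: mem_qline)
  ultimately have "k = 0"
    using hform_ab by (simp add: hform_hscale_left)
  then show ?thesis
    using k by simp
next
  case False
  then show ?thesis
    using assms hsq_span_proj_add[of c] hsq_diff_span_proj_nonneg[of c] by simp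
qed

abbreviation Sigma :: "'n qvec set set" where
  "Sigma \<equiv> {p \<in> hyp. p \<subseteq> qspan2 a b}"

abbreviation Sigma_bd :: "'n qvec set set" where
  "Sigma_bd \<equiv> {p \<in> bdry. p \<subseteq> qspan2 a b}"

lemma Sigma_iff: "p \<in> Sigma \<longleftrightarrow> (\<exists>g. p = qline g \<and> hsq g < 0 \<and> g \<in> qspan2 a b)"
  using qline_self qline_subset_qspan2 by (fastforce simp: hyp_iff qline_in_hyp_iff)

lemma hsq_span_proj_neg: "hsq y < 0 \<Longrightarrow> hsq (span_proj y) < 0"
  using hsq_span_proj_le[of y] by linarith

lemma hratio_span_proj:
  assumes "hsq y < 0" "g \<in> qspan2 a b" "hsq g < 0"
  shows "hratio y (span_proj y) \<le> hratio y g"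
    and "hratio y g \<le> hratio y (span_proj y) \<Longrightarrow> qline g = qline (span_proj y)"
proof -
  define w where "w = span_proj y"
  have w_neg: "hsq w < 0"
    using assms(1) by (simp add: w_def hsq_span_proj_neg)
  have hform_y: "hform y g' = hform w g'" if "g' \<in> qspan2 a b" for g'
    using hform_diff_span_proj[OF that, of y] by (simp add: w_def hform_diff_left)
  have pos: "0 < hsq y * hsq g"
    using assms(1,3) by (rule mult_neg_neg)
  have hratio_w: "hratio y w = hsq w * hsq g / (hsq y * hsq g)"
    using w_neg assms(3)
    by (simp add: hratio_def hform_y w_def span_proj_in_qspan2 hform_self power2_eq_square)
  have hratio_g: "hratio y g = sqnorm (hform g w) / (hsq y * hsq g)"
    by (simp add: hratio_def hform_y[OF assms(2)] hform_swap[of g w])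
  show "hratio y w \<le> hratio y g"
    unfolding hratio_w hratio_g
    using reverse_cauchy_schwarz(1)[OF w_neg, of g] pos by (intro divide_right_mono) simp_all
  assume "hratio y g \<le> hratio y w"
  then have "hsq w * hsq g / (hsq y * hsq g) = sqnorm (hform g w) / (hsq y * hsq g)"
    using \<open>hratio y w \<le> hratio y g\<close> unfolding hratio_w hratio_g by linarith
  then have "sqnorm (hform g w) = hsq w * hsq g"
    using pos by (subst (asm) divide_cancel_right) auto
  then have "g \<in> qline w"
    by (rule reverse_cauchy_schwarz(2)[OF w_neg])
  moreover have "g \<noteq> 0"
    using assms(3) by auto
  ultimately show "qline g = qline w"
    by (rule qline_eq_qline)
qed

lemma proj_Sigma:
  assumes "hsq y < 0"
  shows "proj Sigma (qline y) = qline (span_proj y)"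
proof (rule proj_eqI)
  have w_neg: "hsq (span_proj y) < 0"
    using assms by (rule hsq_span_proj_neg)
  then show "qline (span_proj y) \<in> Sigma"
    unfolding Sigma_iff using span_proj_in_qspan2 by blast
  fix q
  assume "q \<in> Sigma"
  then obtain g where g: "q = qline g" "hsq g < 0" "g \<in> qspan2 a b"
    unfolding Sigma_iff by blast
  then show "hdist (qline y) (qline (span_proj y)) \<le> hdist (qline y) q
      \<and> (hdist (qline y) q \<le> hdist (qline y) (qline (span_proj y)) \<longrightarrow> q = qline (span_proj y))"
    using hratio_span_proj[OF assms g(3,2)] hdist_qline_le_iff[OF assms w_neg g(2)]
      hdist_qline_le_iff[OF assms g(2) w_neg] by auto
qed

end

section \<open>Extension of the projection to ideal points\<close>

lemma norm_qmul: "norm (qmul a b) = norm a * norm b"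
  by (simp add: norm_quat_eq sqnorm_mult real_sqrt_mult)

lemma bounded_bilinear_qmul: "bounded_bilinear qmul"
proof
  fix a a' b b' :: quat and r :: real
  show "qmul (a + a') b = qmul a b + qmul a' b" "qmul a (b + b') = qmul a b + qmul a b'"
    by (simp_all flip: hquat_of_inject add: distrib_right distrib_left)
  show "qmul (r *\<^sub>R a) b = r *\<^sub>R qmul a b" "qmul a (r *\<^sub>R b) = r *\<^sub>R qmul a b"
    by (simp_all flip: hquat_of_inject)
  show "\<exists>K. \<forall>a b. norm (qmul a b) \<le> norm a * norm b * K"
    by (rule exI[of _ 1]) (simp add: norm_qmul)
qed

lemmas tendsto_qmul = bounded_bilinear.tendsto[OF bounded_bilinear_qmul]

lemma bounded_linear_qcnj: "bounded_linear qcnj"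
proof (rule bounded_linear_intro[where K = 1])
  fix a b :: quat and r :: real
  show "qcnj (a + b) = qcnj a + qcnj b" "qcnj (r *\<^sub>R a) = r *\<^sub>R qcnj a"
    by (simp_all flip: hquat_of_inject add: hconj_add)
  show "norm (qcnj a) \<le> norm a * 1"
    by (simp add: norm_quat_eq)
qed

lemmas tendsto_qcnj = bounded_linear.tendsto[OF bounded_linear_qcnj]

lemma tendsto_herm_left: "(f \<longlongrightarrow> v) F \<Longrightarrow> ((\<lambda>x. herm (f x) w) \<longlongrightarrow> herm v w) F"
  unfolding herm_def by (intro tendsto_intros tendsto_qmul tendsto_vec_nth tendsto_fst tendsto_snd)

lemma tendsto_qsmul:
  "(c \<longlongrightarrow> c0) F \<Longrightarrow> (f \<longlongrightarrow> v) F \<Longrightarrow> ((\<lambda>x. qsmul (c x) (f x)) \<longlongrightarrow> qsmul c0 v) F"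
  unfolding qsmul_def by (intro tendsto_intros tendsto_vec_lambda tendsto_qmul tendsto_vec_nth)

definition qinv :: "quat \<Rightarrow> quat" where
  "qinv a = inverse ((norm a)\<^sup>2) *\<^sub>R qcnj a"

lemma hquat_of_qinv: "hquat_of (qinv a) = inverse (hquat_of a)"
  by (simp add: qinv_def norm_quat_eq inverse_hquat_def sqnorm_nonneg)

lemma tendsto_qinv: "(f \<longlongrightarrow> a) F \<Longrightarrow> a \<noteq> 0 \<Longrightarrow> ((\<lambda>x. qinv (f x)) \<longlongrightarrow> qinv a) F"
  unfolding qinv_def by (intro tendsto_intros tendsto_qcnj) auto

lemma mem_qline_limit:
  assumes "\<And>k. W k \<in> qline (U k)" "\<And>k. snd (U k) \<noteq> 0" "W \<longlonglongrightarrow> v" "U \<longlonglongrightarrow> u" "snd u \<noteq> 0"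
  shows "v \<in> qline u"
proof -
  have W_eq: "W k = qsmul (qmul (snd (W k)) (qinv (snd (U k)))) (U k)" for k
  proof -
    obtain m where m: "W k = m *\<^sub>H U k"
      using assms(1) by (auto simp: mem_qline)
    moreover have "last_coord (U k) \<noteq> 0"
      using assms(2) by (simp add: last_coord_def)
    ultimately have "m = last_coord (W k) * inverse (last_coord (U k))"
      by (simp add: mult.assoc)
    then have "quat_of m = qmul (snd (W k)) (qinv (snd (U k)))"
      by (simp add: last_coord_def hquat_of_qinv flip: hquat_of_inject)
    then show ?thesis
      by (metis m hscale_def)
  qed
  have "(\<lambda>k. qsmul (qmul (snd (W k)) (qinv (snd (U k)))) (U k))
      \<longlonglongrightarrow> qsmul (qmul (snd v) (qinv (snd u))) u"
    by (intro tendsto_qsmul tendsto_qmul tendsto_qinv tendsto_snd assms)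
  then have "v = qsmul (qmul (snd v) (qinv (snd u))) u"
    using assms(3) W_eq LIMSEQ_unique by simp
  then show ?thesis
    unfolding qline_def by blast
qed

lemma snd_neq_0_if_null: "hsq v = 0 \<Longrightarrow> v \<noteq> 0 \<Longrightarrow> snd v \<noteq> 0"
  using last_coord_neq_0[of v] by (simp add: last_coord_def)

lemma snd_neq_0_if_hsq_neg: "hsq v < 0 \<Longrightarrow> snd v \<noteq> 0"
  using last_coord_neq_0[of v] by (cases "v = 0") (simp_all add: last_coord_def)

lemma hsq_scale_last_coord_neg:
  assumes "hsq c = 0" "c \<noteq> 0" "0 < t"
  shows "hsq (c + t *\<^sub>R (0, snd c)) < 0"
proof -
  have "last_coord c \<noteq> 0"
    using assms by (simp add: last_coord_neq_0)
  have coord_eq: "coord (c + t *\<^sub>R (0, snd c)) i = coord c i" for i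
    by (simp add: coord_def)
  have last_coord_eq: "last_coord (c + t *\<^sub>R (0, snd c)) = (1 + t) *\<^sub>R last_coord c"
    by (simp add: last_coord_def scaleR_add_left)
  have "hsq (c + t *\<^sub>R (0, snd c)) = hsq c + (1 - (1 + t)\<^sup>2) * sqnorm (last_coord c)"
    unfolding hsq_eq coord_eq last_coord_eq sqnorm_scaleR by (simp add: algebra_simps)
  also have "\<dots> < 0"
    using assms one_less_power[of "1 + t" 2] sqnorm_pos[OF \<open>last_coord c \<noteq> 0\<close>]
    by (simp add: mult_neg_pos)
  finally show ?thesis .
qed

context null_pair
begin

lemma span_proj_eq_qsmul:
  "span_proj z = qsmul (qmul (herm z b) (quat_of (inverse (hform a b)))) a
     + qsmul (qmul (herm z a) (quat_of (inverse (hconj (hform a b))))) b"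
  by (simp add: span_proj_def hscale_def hform_def quat_of_mult)

lemma tendsto_span_proj: "(f \<longlongrightarrow> v) F \<Longrightarrow> ((\<lambda>x. span_proj (f x)) \<longlongrightarrow> span_proj v) F"
  unfolding span_proj_eq_qsmul
  by (intro tendsto_add tendsto_qsmul tendsto_qmul tendsto_herm_left tendsto_const)

lemma span_proj_null_neq_0: "hsq c = 0 \<Longrightarrow> c \<noteq> 0 \<Longrightarrow> span_proj c \<noteq> 0"
  using span_proj_null by fastforce

lemma pconv_proj_Sigma:
  assumes "span_proj c \<noteq> 0" "\<And>k. Y k \<in> hyp" "pconv Y (qline c)"
  shows "pconv (\<lambda>k. proj Sigma (Y k)) (qline (span_proj c))"
proof -
  obtain V v where v: "v \<in> qline c" "v \<noteq> 0" and V: "\<And>k. V k \<in> Y k" "\<And>k. V k \<noteq> 0" "V \<longlonglongrightarrow> v"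
    using assms(3) unfolding pconv_def by blast
  have V_neg: "hsq (V k) < 0" and proj_Y: "proj Sigma (Y k) = qline (span_proj (V k))" for k
  proof -
    obtain y where "Y k = qline y" "hsq y < 0"
      using assms(2)[of k] unfolding hyp_iff by blast
    then have "Y k = qline (V k)"
      using V(1,2) qline_eq_qline by metis
    then show "hsq (V k) < 0"
      using assms(2) by (metis qline_in_hyp_iff)
    then show "proj Sigma (Y k) = qline (span_proj (V k))"
      using \<open>Y k = qline (V k)\<close> by (simp add: proj_Sigma)
  qed
  obtain k0 where "k0 \<noteq> 0" "v = k0 *\<^sub>H c"
    using v by (rule mem_qline_nonzero)
  then have "span_proj v \<in> qline (span_proj c)" "span_proj v \<noteq> 0"
    using assms(1) by (auto simp: span_proj_hscale mem_qline)
  moreover have "span_proj (V k) \<in> proj Sigma (Y k)" "span_proj (V k) \<noteq> 0" for k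
    using hsq_span_proj_neg[OF V_neg, of k] by (auto simp: proj_Y qline_self)
  moreover have "(\<lambda>k. span_proj (V k)) \<longlonglongrightarrow> span_proj v"
    using V(3) by (rule tendsto_span_proj)
  ultimately show ?thesis
    unfolding pconv_def by (intro exI[of _ "\<lambda>k. span_proj (V k)"] exI[of _ "span_proj v"]) blast
qed

lemma pconv_proj_Sigma_unique:
  assumes "hsq c = 0" "c \<noteq> 0" "p \<in> hyp \<union> bdry"
    and conv: "\<And>Y. (\<forall>k. Y k \<in> hyp) \<Longrightarrow> pconv Y (qline c) \<Longrightarrow> pconv (\<lambda>k. proj Sigma (Y k)) p"
  shows "p = qline (span_proj c)"
proof -
  define V where "V k = c + inverse (real (Suc k)) *\<^sub>R (0, snd c)" for k
  have V_neg: "hsq (V k) < 0" for k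
    unfolding V_def using assms(1,2) by (rule hsq_scale_last_coord_neg) simp
  have "V \<longlonglongrightarrow> c + 0 *\<^sub>R (0, snd c)"
    unfolding V_def by (intro tendsto_intros LIMSEQ_inverse_real_of_nat)
  then have "V \<longlonglongrightarrow> c"
    by (simp only: scaleR_zero_left add.right_neutral)
  then have "pconv (\<lambda>k. qline (V k)) (qline c)"
    unfolding pconv_def using V_neg assms(2) qline_self by (metis hsq_zero less_irrefl)
  then have "pconv (\<lambda>k. proj Sigma (qline (V k))) p"
    using conv V_neg by (simp add: qline_in_hyp_iff)
  then obtain W v where v: "v \<in> p" "v \<noteq> 0"
    and W: "\<And>k. W k \<in> qline (span_proj (V k))" "W \<longlonglongrightarrow> v"
    unfolding pconv_def by (auto simp: proj_Sigma V_neg)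
  have "snd (span_proj (V k)) \<noteq> 0" for k
    using hsq_span_proj_neg[OF V_neg, of k] by (simp add: snd_neq_0_if_hsq_neg)
  moreover have "snd (span_proj c) \<noteq> 0"
    using span_proj_null[OF assms(1)] assms by (auto simp: snd_neq_0_if_hsq_neg snd_neq_0_if_null)
  ultimately have "v \<in> qline (span_proj c)"
    using mem_qline_limit[OF W(1) _ W(2) tendsto_span_proj[OF \<open>V \<longlonglongrightarrow> c\<close>]] by blast
  moreover obtain s where "p = qline s"
    using assms(3) by (auto simp: hyp_iff bdry_iff)
  ultimately show ?thesis
    using v by (metis qline_eq_qline)
qed

lemma proj_ext_Sigma:
  assumes "hsq c = 0" "c \<noteq> 0"
  shows "proj_ext Sigma Sigma_bd (qline c) = qline (span_proj c)"
  unfolding proj_ext_def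
proof (rule the_equality)
  have "qline (span_proj c) \<in> hyp \<union> bdry"
    using span_proj_null[OF assms(1)] assms by (auto simp: qline_in_hyp_iff qline_in_bdry_iff)
  then have "qline (span_proj c) \<in> Sigma \<union> Sigma_bd"
    using qline_subset_qspan2[OF span_proj_in_qspan2] by blast
  then show "qline (span_proj c) \<in> Sigma \<union> Sigma_bd \<and>
      (\<forall>Y. (\<forall>k. Y k \<in> hyp) \<and> pconv Y (qline c) \<longrightarrow>
        pconv (\<lambda>k. proj Sigma (Y k)) (qline (span_proj c)))"
    using pconv_proj_Sigma span_proj_null_neq_0[OF assms] by blast
next
  fix p
  assume "p \<in> Sigma \<union> Sigma_bd \<and>
      (\<forall>Y. (\<forall>k. Y k \<in> hyp) \<and> pconv Y (qline c) \<longrightarrow> pconv (\<lambda>k. proj Sigma (Y k)) p)"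
  then show "p = qline (span_proj c)"
    using pconv_proj_Sigma_unique[OF assms, of p] by blast
qed

end

section \<open>Distance to the real geodesic\<close>

definition triple :: "'n::finite qvec \<Rightarrow> 'n qvec \<Rightarrow> 'n qvec \<Rightarrow> hquat" where
  "triple x y z = hform x y * hform y z * hform z x"

lemma sqnorm_triple:
  "sqnorm (triple x y z) = sqnorm (hform x y) * sqnorm (hform z y) * sqnorm (hform z x)"
  by (simp add: triple_def sqnorm_mult hform_swap[of y z])

lemma Inf_arcosh_amgm:
  fixes \<alpha> \<beta> M :: real
  assumes "0 < \<alpha>" "0 < \<beta>" "0 < M" "1 \<le> 2 * \<alpha> * \<beta> / M"
  shows "Inf ((\<lambda>r. arcosh ((\<alpha>\<^sup>2 + r\<^sup>2 * \<beta>\<^sup>2) / (r * M))) ` {0<..})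
    = arcosh (2 * \<alpha> * \<beta> / M)"
proof (rule cInf_eq_minimum)
  have "(\<alpha>\<^sup>2 + (\<alpha> / \<beta>)\<^sup>2 * \<beta>\<^sup>2) / (\<alpha> / \<beta> * M) = 2 * \<alpha> * \<beta> / M"
    using assms(1,2) by (simp add: field_simps power2_eq_square)
  then show "arcosh (2 * \<alpha> * \<beta> / M)
      \<in> (\<lambda>r. arcosh ((\<alpha>\<^sup>2 + r\<^sup>2 * \<beta>\<^sup>2) / (r * M))) ` {0<..}"
    using assms(1,2) by (intro image_eqI[of _ _ "\<alpha> / \<beta>"]) auto
next
  fix x
  assume "x \<in> (\<lambda>r. arcosh ((\<alpha>\<^sup>2 + r\<^sup>2 * \<beta>\<^sup>2) / (r * M))) ` {0<..}"
  then obtain r where r: "0 < r" and x: "x = arcosh ((\<alpha>\<^sup>2 + r\<^sup>2 * \<beta>\<^sup>2) / (r * M))"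
    by auto
  have "2 * r * \<alpha> * \<beta> \<le> \<alpha>\<^sup>2 + r\<^sup>2 * \<beta>\<^sup>2"
    using zero_le_power2[of "\<alpha> - r * \<beta>"] by (simp add: power2_eq_square algebra_simps)
  then have "2 * \<alpha> * \<beta> / M \<le> (\<alpha>\<^sup>2 + r\<^sup>2 * \<beta>\<^sup>2) / (r * M)"
    using r assms(3) by (simp add: field_simps)
  then show "arcosh (2 * \<alpha> * \<beta> / M) \<le> x"
    using assms(4) x arcosh_le_arcosh_iff by simp
qed

context null_pair
begin

text \<open>With the coefficient of \<open>a\<close> normalised to 1, the points of the geodesic have lifts
  \<open>a + \<nu> b\<close> with \<open><a, \<nu> b> = -r\<close> real and negative, which determines \<open>\<nu>\<close>.\<close>

definition geod_point :: "real \<Rightarrow> 'n qvec" where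
  "geod_point r = a + (of_real (- r) * hconj (inverse (hform a b))) *\<^sub>H b"

lemma hform_a_hscale_b_eq_of_real:
  "hform a (\<nu> *\<^sub>H b) = of_real s \<longleftrightarrow> \<nu> = of_real s * hconj (inverse (hform a b))"
proof -
  have "\<nu> = of_real s * hconj (inverse (hform a b)) \<longleftrightarrow> hconj \<nu> = inverse (hform a b) * of_real s"
    by (metis hconj_hconj hconj_mult hconj_of_real)
  also have "\<dots> \<longleftrightarrow> hform a b * hconj \<nu> = of_real s"
    using hform_ab by (metis left_inverse right_inverse mult.assoc mult_1_left)
  finally show ?thesis
    by (simp add: hform_hscale_right)
qed

lemma hsq_geod_point: "hsq (geod_point r) = - 2 * r"
proof -
  have "hsq (geod_point r) = 2 * qre (hform a ((of_real (- r) * hconj (inverse (hform a b))) *\<^sub>H b))"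
    using hsq_span[of 1] by (simp add: geod_point_def hform_hscale_right)
  then show ?thesis
    by (simp only: hform_a_hscale_b_eq_of_real[THEN iffD2, OF refl]) simp
qed

lemma mem_geodE:
  assumes "g \<in> geod (qline a) (qline b)"
  obtains r where "0 < r" "g = qline (geod_point r)"
proof -
  obtain a' b' where g: "g = qline (a' + b')" and a': "a' \<in> qline a" "a' \<noteq> 0"
    and b': "b' \<in> qline b" and real: "qis_real (herm a' b')" and hyp: "qline (a' + b') \<in> hyp"
    using assms unfolding geod_def by blast
  obtain l where l: "l \<noteq> 0" "a' = l *\<^sub>H a"
    using a' by (rule mem_qline_nonzero)
  obtain m where m: "b' = m *\<^sub>H b"
    using b' by (auto simp: mem_qline)
  obtain s where s: "hform a' b' = of_real s"
    using real by (auto simp: qis_real_iff hform_def)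
  define k where "k = inverse l"
  have "hform a ((k * m) *\<^sub>H b) = k * hform a' b' * hconj k"
    using l by (simp add: k_def m hform_hscale_left hform_hscale_right hconj_mult flip: mult.assoc)
  also have "\<dots> = of_real (s * sqnorm k)"
    by (simp add: s of_real_mult_left of_real_mult_right mult_hconj_self of_real_def)
  finally have "k * m = of_real (s * sqnorm k) * hconj (inverse (hform a b))"
    by (simp only: hform_a_hscale_b_eq_of_real)
  then have "k *\<^sub>H (a' + b') = geod_point (- (s * sqnorm k))"
    using l by (simp add: geod_point_def k_def m hscale_add_right)
  then have "g = qline (geod_point (- (s * sqnorm k)))"
    using g l by (metis inverse_nonzero_iff_nonzero k_def qline_hscale)
  moreover from this have "0 < - (s * sqnorm k)"
    using hyp g by (simp add: qline_in_hyp_iff hsq_geod_point)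
  ultimately show thesis
    using that by blast
qed

lemma geod_point_in_geod:
  assumes "0 < r"
  shows "qline (geod_point r) \<in> geod (qline a) (qline b)"
proof -
  define \<nu> where "\<nu> = of_real (- r) * hconj (inverse (hform a b))"
  have "\<nu> *\<^sub>H b \<noteq> 0"
    using assms hform_ab b_neq_0 by (simp add: \<nu>_def)
  moreover have "qis_real (herm a (\<nu> *\<^sub>H b))"
    unfolding qis_real_iff hform_def[symmetric] \<nu>_def hform_a_hscale_b_eq_of_real by blast
  moreover have "qline (a + \<nu> *\<^sub>H b) \<in> hyp"
    using assms hsq_geod_point[of r] by (simp add: qline_in_hyp_iff geod_point_def \<nu>_def)
  ultimately show ?thesis
    unfolding geod_def geod_point_def \<nu>_def[symmetric]
    using qline_self a_neq_0 hscale_in_qline by blast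
qed

lemma geod_eq: "geod (qline a) (qline b) = (\<lambda>r. qline (geod_point r)) ` {0<..}"
  by (auto elim!: mem_geodE intro: geod_point_in_geod)

lemma hform_span_proj_geod_point:
  "hform (span_proj c) (geod_point r) = hform c a - r *\<^sub>R (hform c b * inverse (hform a b))"
  by (simp add: geod_point_def hform_add_right hform_hscale_right hform_span_proj_a
      hform_span_proj_b hconj_minus hconj_mult hconj_inverse of_real_mult_right)

lemma hsq_span_proj_eq:
  "hsq (span_proj c) = 2 * qre (hform c a * hconj (hform c b * inverse (hform a b)))"
proof -
  have "hsq (span_proj c) = 2 * qre (hform c b * inverse (hform a b) * hform a b
      * hconj (hform c a * inverse (hconj (hform a b))))"
    unfolding span_proj_def by (rule hsq_span)
  also have "hform c b * inverse (hform a b) * hform a b = hform c b"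
    using hform_ab by (simp add: mult.assoc)
  also have "hform c b * hconj (hform c a * inverse (hconj (hform a b)))
      = hconj (hform c a * hconj (hform c b * inverse (hform a b)))"
    by (simp add: hconj_mult hconj_inverse mult.assoc)
  finally show ?thesis
    by simp
qed

lemma qre_eq_triple:
  "qre (hform c a * hconj (hform c b * inverse (hform a b)))
    = qre (triple a b c) / sqnorm (hform a b)"
proof -
  have "hform c a * hconj (hform c b * inverse (hform a b))
      = inverse (sqnorm (hform a b)) *\<^sub>R (hform c a * (hform a b * hform b c))"
    by (simp add: hconj_mult hconj_inverse inverse_hquat_def hform_swap[of b c] mult.assoc)
  also have "qre (hform c a * (hform a b * hform b c)) = qre (triple a b c)"
    by (simp only: triple_def qre_mult_commute[of "hform c a"])
  ultimately show ?thesis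
    by (simp add: divide_inverse mult.commute)
qed

lemma hdist_span_proj_geod_point:
  fixes c :: "'n qvec"
  defines "q \<equiv> hform c a" and "Y \<equiv> hform c b * inverse (hform a b)" and "N \<equiv> hsq (span_proj c)"
  assumes "N < 0" "0 < r"
  shows "hdist (qline (span_proj c)) (qline (geod_point r))
    = arcosh ((sqnorm q + r\<^sup>2 * sqnorm Y) / (r * - N))"
proof -
  have "sqnorm (hform (span_proj c) (geod_point r)) = sqnorm q - r * N + r\<^sup>2 * sqnorm Y"
    by (simp add: hform_span_proj_geod_point sqnorm_diff hsq_span_proj_eq q_def Y_def N_def
        of_real_mult_right)
  then have "2 * hratio (span_proj c) (geod_point r) - 1
      = 2 * (sqnorm q - r * N + r\<^sup>2 * sqnorm Y) / (N * (- 2 * r)) - 1"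
    by (simp add: hratio_def hsq_geod_point flip: N_def)
  also have "\<dots> = (sqnorm q + r\<^sup>2 * sqnorm Y) / (r * - N)"
    using assms(4,5) by (simp add: field_simps)
  finally show ?thesis
    using assms(4,5) by (simp add: hdist_qline hsq_geod_point N_def)
qed

lemma cosh_min_eq_triple:
  fixes c :: "'n qvec"
  defines "q \<equiv> hform c a" and "Y \<equiv> hform c b * inverse (hform a b)" and "N \<equiv> hsq (span_proj c)"
  assumes "N < 0"
  shows "2 * sqrt (sqnorm q) * sqrt (sqnorm Y) / - N
    = sqrt (sqnorm (triple a b c)) / - qre (triple a b c)"
proof -
  define \<sigma> where "\<sigma> = sqrt (sqnorm (hform a b))"
  have "0 < \<sigma>"
    using hform_ab sqnorm_pos by (simp add: \<sigma>_def)
  have sqnorm_ab: "sqnorm (hform a b) = \<sigma> * \<sigma>"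
    by (simp add: \<sigma>_def sqnorm_nonneg)
  have Y_eq: "sqrt (sqnorm Y) = sqrt (sqnorm (hform c b)) / \<sigma>"
    by (simp add: Y_def \<sigma>_def sqnorm_mult sqnorm_inverse real_sqrt_mult real_sqrt_inverse
        divide_inverse)
  have T_eq: "sqrt (sqnorm (triple a b c)) = \<sigma> * sqrt (sqnorm (hform c b)) * sqrt (sqnorm q)"
    by (simp add: sqnorm_triple real_sqrt_mult q_def \<sigma>_def)
  have N_eq: "N = 2 * qre (triple a b c) / (\<sigma> * \<sigma>)"
    by (simp add: N_def hsq_span_proj_eq qre_eq_triple sqnorm_ab)
  then have "qre (triple a b c) \<noteq> 0"
    using assms(4) by auto
  then show ?thesis
    unfolding Y_eq T_eq N_eq using \<open>0 < \<sigma>\<close> by (simp add: field_simps)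
qed

lemma hsq_span_proj_triple: "hsq (span_proj c) = 2 * qre (triple a b c) / sqnorm (hform a b)"
  by (simp add: hsq_span_proj_eq qre_eq_triple)

lemma qre_triple_neg: "hsq (span_proj c) < 0 \<Longrightarrow> qre (triple a b c) < 0"
  using sqnorm_pos[OF hform_ab] by (simp add: hsq_span_proj_triple divide_less_0_iff)

lemma span_proj_in_Sigma_bd_iff:
  assumes "hsq c = 0" "c \<noteq> 0"
  shows "qline (span_proj c) \<in> Sigma_bd \<longleftrightarrow> hsq (span_proj c) = 0"
  using span_proj_null[OF assms(1)] assms qline_subset_qspan2[OF span_proj_in_qspan2[of c]]
  by (auto simp: qline_in_bdry_iff)

lemma qre_triple_eq_0_if_in_Sigma_bd:
  "hsq c = 0 \<Longrightarrow> c \<noteq> 0 \<Longrightarrow> qline (span_proj c) \<in> Sigma_bd \<Longrightarrow> qre (triple a b c) = 0"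
  using span_proj_in_Sigma_bd_iff hsq_span_proj_triple[of c] hform_ab by simp

lemma hsq_span_proj_neg_if_notin_Sigma_bd:
  "hsq c = 0 \<Longrightarrow> c \<noteq> 0 \<Longrightarrow> qline (span_proj c) \<notin> Sigma_bd \<Longrightarrow> hsq (span_proj c) < 0"
  using span_proj_in_Sigma_bd_iff hsq_span_proj_le[of c] by fastforce

lemma hdist_set_span_proj_geod:
  assumes "hsq (span_proj c) < 0"
  shows "hdist_set (qline (span_proj c)) (geod (qline a) (qline b))
    = arcosh (sqrt (sqnorm (triple a b c)) / - qre (triple a b c))"
proof -
  define \<alpha> where "\<alpha> = sqrt (sqnorm (hform c a))"
  define \<beta> where "\<beta> = sqrt (sqnorm (hform c b * inverse (hform a b)))"
  define M where "M = - hsq (span_proj c)"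
  define K where "K = sqrt (sqnorm (triple a b c)) / - qre (triple a b c)"
  have "0 < M"
    using assms by (simp add: M_def)
  have K_eq: "K = 2 * \<alpha> * \<beta> / M"
    using cosh_min_eq_triple[OF assms] by (simp add: K_def \<alpha>_def \<beta>_def M_def)
  have "qre (triple a b c) < 0"
    using assms by (rule qre_triple_neg)
  then have "1 \<le> K"
    unfolding K_def by (rule one_le_norm_div_neg_qre)
  have "triple a b c \<noteq> 0"
    using \<open>qre (triple a b c) < 0\<close> by auto
  then have "hform c a \<noteq> 0" "hform c b \<noteq> 0"
    by (auto simp: sqnorm_triple simp flip: sqnorm_eq_0_iff)
  then have "0 < \<alpha>" "0 < \<beta>"
    using hform_ab by (simp_all add: \<alpha>_def \<beta>_def sqnorm_pos)
  have dist: "hdist (qline (span_proj c)) (qline (geod_point r))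
      = arcosh ((\<alpha>\<^sup>2 + r\<^sup>2 * \<beta>\<^sup>2) / (r * M))"
    if "0 < r" for r
    using hdist_span_proj_geod_point[OF assms that] by (simp add: \<alpha>_def \<beta>_def M_def sqnorm_nonneg)
  have "hdist_set (qline (span_proj c)) (geod (qline a) (qline b))
      = Inf ((\<lambda>r. arcosh ((\<alpha>\<^sup>2 + r\<^sup>2 * \<beta>\<^sup>2) / (r * M))) ` {0<..})"
    unfolding hdist_set_def geod_eq image_image by (rule INF_cong[OF refl]) (simp add: dist)
  also have "\<dots> = arcosh K"
    using Inf_arcosh_amgm[OF \<open>0 < \<alpha>\<close> \<open>0 < \<beta>\<close> \<open>0 < M\<close>] \<open>1 \<le> K\<close> by (simp add: K_eq)
  finally show ?thesis
    by (simp add: K_def)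
qed

end

section \<open>The angular invariant\<close>

lemma qcartan_eq:
  "qcartan x1 x2 x3 = arccos (\<bar>qre (triple (lift x1) (lift x2) (lift x3))\<bar>
                         / sqrt (sqnorm (triple (lift x1) (lift x2) (lift x3))))"
  by (simp add: qcartan_def Let_def triple_def hform_def norm_quat_eq flip: hquat_of_sel(1))

lemma tan_arccos_inverse:
  fixes K :: real
  assumes "1 \<le> K"
  shows "\<bar>tan (arccos (1 / K))\<bar> = sinh (arcosh K)" "arccos (1 / K) < pi / 2"
proof -
  have "\<bar>1 / K\<bar> \<le> 1"
    using assms by simp
  then have "cos (arccos (1 / K)) = 1 / K" "sin (arccos (1 / K)) = sqrt (1 - (1 / K)\<^sup>2)"
    by (rule cos_arccos_abs, rule sin_arccos_abs)
  then have "tan (arccos (1 / K)) = sqrt (1 - (1 / K)\<^sup>2) * K"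
    by (simp add: tan_def)
  also have "\<dots> = sqrt ((K\<^sup>2 - 1) / K\<^sup>2) * K"
    using assms by (simp add: field_simps)
  also have "\<dots> = sqrt (K\<^sup>2 - 1)"
    using assms by (simp add: real_sqrt_divide)
  finally show "\<bar>tan (arccos (1 / K))\<bar> = sinh (arcosh K)"
    using assms by (simp add: sinh_arcosh_real)
  have "arccos (1 / K) < arccos 0"
    using assms by (intro arccos_less_arccos) auto
  then show "arccos (1 / K) < pi / 2"
    by simp
qed

lemma tan_arccos_qre:
  assumes "qre x < 0"
  shows "arccos (\<bar>qre x\<bar> / sqrt (sqnorm x)) < pi / 2"
    and "\<bar>tan (arccos (\<bar>qre x\<bar> / sqrt (sqnorm x)))\<bar> = sinh (arcosh (sqrt (sqnorm x) / - qre x))"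
  using tan_arccos_inverse[OF one_le_norm_div_neg_qre[OF assms]] assms by simp_all

theorem theorem3p4:
  fixes x1 x2 x3 :: "('n::finite) qvec set"
  assumes "x1 \<in> bdry" "x2 \<in> bdry" "x3 \<in> bdry"
    and "x1 \<noteq> x2" "x2 \<noteq> x3" "x1 \<noteq> x3"
  shows "let P = proj_ext (QLine x1 x2) (QLine_bd x1 x2) x3 in
           (P \<in> QLine_bd x1 x2 \<longrightarrow> qcartan x1 x2 x3 = pi / 2) \<and>
           (P \<notin> QLine_bd x1 x2 \<longrightarrow>
              qcartan x1 x2 x3 < pi / 2 \<and>
              \<bar>tan (qcartan x1 x2 x3)\<bar> = sinh (hdist_set P (geod x1 x2)))"
proof -
  define a b c where "a = lift x1" and "b = lift x2" and "c = lift x3"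
  interpret null_pair a b
    using bdry_lift[OF assms(1)] bdry_lift[OF assms(2)] hform_lift_neq_0[OF assms(1,2,4)]
    by unfold_locales (simp_all add: a_def b_def)
  have x12: "x1 = qline a" "x2 = qline b" and c: "x3 = qline c" "c \<noteq> 0" "hsq c = 0"
    using bdry_lift assms(1-3) by (simp_all add: a_def b_def c_def)
  have Sigma: "QLine x1 x2 = Sigma" "QLine_bd x1 x2 = Sigma_bd"
    by (simp_all add: QLine_def QLine_bd_def a_def b_def)
  have P: "proj_ext (QLine x1 x2) (QLine_bd x1 x2) x3 = qline (span_proj c)"
    using proj_ext_Sigma c by (simp add: Sigma)
  have cartan: "qcartan x1 x2 x3 = arccos (\<bar>qre (triple a b c)\<bar> / sqrt (sqnorm (triple a b c)))"
    by (simp add: qcartan_eq a_def b_def c_def)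
  have "qcartan x1 x2 x3 = pi / 2" if "qline (span_proj c) \<in> Sigma_bd"
    using qre_triple_eq_0_if_in_Sigma_bd[OF c(3,2) that] by (simp add: cartan)
  moreover have "qcartan x1 x2 x3 < pi / 2 \<and>
      \<bar>tan (qcartan x1 x2 x3)\<bar> = sinh (hdist_set (qline (span_proj c)) (geod x1 x2))"
    if "qline (span_proj c) \<notin> Sigma_bd"
  proof -
    note neg = hsq_span_proj_neg_if_notin_Sigma_bd[OF c(3,2) that]
    show ?thesis
      unfolding cartan
      using tan_arccos_qre[OF qre_triple_neg[OF neg]] hdist_set_span_proj_geod[OF neg]
      by (simp add: x12)
  qed
  ultimately show ?thesis
    unfolding Let_def P unfolding Sigma by blast
qed

end
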